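(* Let $h\in\mathbb{Z}[t]$ be a monic polynomial of degree $k$ with coefficients in $\{0,1\}$ whose reduction mod $2$ is irreducible over $GF(2)$, so that $GF(2^k)$ is identified with the set of polynomials of degree $<k$ with coefficients in $\{0,1\}$, with arithmetic modulo $2$ and $h$; identify its additive group with $G=\mathbb{Z}_2^k$ via coefficient vectors, and let $\tilde G=\mathbb{R}_2^k$. For $x\in G$, regarded as an integer polynomial, let $\rho(x)\in\mathbb{Z}[t]$ be the remainder of $x^2$ upon division by $h$ in $\mathbb{Z}[t]$ (degree $<k$), and define $f(x)\in\tilde G$ as the coefficient vector of $\rho(x)/2$ with each coefficient taken modulo $2$. Then for all $g_1,g_2,g_3,g_4\in G$ with $g_1+g_2=g_3+g_4$ (in $G$) and $\{g_1,g_2\}\neq\{g_3,g_4\}$, the element $f(g_1)+f(g_2)-f(g_3)-f(g_4)\in\tilde G$ has all coordinates integers (mod $2$) and is nonzero, i.e. lies in $G\setminus\{0\}$.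
   Context: $\mathbb{R}_2$ denotes the additive group of reals modulo $2$, and $G=\mathbb{Z}_2^k\subset\tilde G=\mathbb{R}_2^k$. *)

theory Defs
  imports "HOL-Computational_Algebra.Polynomial" "HOL-Library.Z2" Complex_Main
begin

text \<open>Reduction of reals modulo 2: representative in [0,2). R_2 = reals mod 2.\<close>
definition mod2r :: "real \<Rightarrow> real" where
  "mod2r x = x - 2 * of_int \<lfloor>x / 2\<rfloor>"

definition inG :: "nat \<Rightarrow> int poly \<Rightarrow> bool" where
  "inG k x \<longleftrightarrow> degree x < k \<and> (\<forall>i. coeff x i \<in> {0, 1})"

definition addG :: "int poly \<Rightarrow> int poly \<Rightarrow> nat \<Rightarrow> int" where
  "addG x y i = (coeff x i + coeff y i) mod 2"

text \<open>rho h x: remainder of x^2 upon division by h. For monic h the remainder in Z[t]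
  coincides with the remainder computed in Q[t]; we compute it there.\<close>
definition rho :: "int poly \<Rightarrow> int poly \<Rightarrow> rat poly" where
  "rho h x = map_poly of_int (x ^ 2) mod map_poly of_int h"

definition fmap :: "int poly \<Rightarrow> int poly \<Rightarrow> nat \<Rightarrow> real" where
  "fmap h x i = mod2r (real_of_rat (coeff (rho h x) i) / 2)"

end

theory Submission
  imports Defs "HOL-Computational_Algebra.Polynomial_Factorial"
    "HOL-Computational_Algebra.Field_as_Ring"
begin

(*
  Let r_j be the integer remainder of g_j^2 modulo the monic polynomial h, g_j^2 = h q_j + r_j,
  and put R = r1 + r2 - r3 - r4, Q = q1 + q2 - q3 - q4.  As g1 + g2 = g3 + g4 in G, we have
  g1 + g2 - g3 - g4 = 2e for an integer polynomial e, and a ring identity gives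

      R + h Q = g1^2 + g2^2 - g3^2 - g4^2 = 2 S,   S = (g1 - g3)(g3 - g2) + 2 W.

  Modulo 2, h then divides R; since deg R < deg h, R vanishes mod 2, so R = 2T with
  T congruent to (g1 - g3)(g3 - g2) modulo 2 and h.  The i-th coordinate of
  f(g1) + f(g2) - f(g3) - f(g4) is the i-th coefficient of T modulo 2, an integer.  If all
  were even, the irreducible, hence prime, h mod 2 would divide g1 - g3 or g3 - g2 mod 2;
  these have degree < k, so g1 = g3 or g2 = g3, and with g1 + g2 = g3 + g4 this contradicts
  {g1, g2} \<noteq> {g3, g4}.
*)

text \<open>GF(2) as a field with gcd: then GF(2)[t] is a factorial ring, in which
  irreducible elements are prime.\<close>

instantiation bit ::
  "{unique_euclidean_ring, normalization_euclidean_semiring, normalization_semidom_multiplicative}"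
begin
definition [simp]: "normalize_bit = (normalize_field :: bit \<Rightarrow> _)"
definition [simp]: "unit_factor_bit = (unit_factor_field :: bit \<Rightarrow> _)"
definition [simp]: "euclidean_size_bit = (euclidean_size_field :: bit \<Rightarrow> _)"
definition [simp]: "division_segment (x :: bit) = 1"
instance
  by standard (simp_all add: dvd_field_iff field_split_simps split: if_splits)
end

instantiation bit :: euclidean_ring_gcd
begin
definition gcd_bit :: "bit \<Rightarrow> bit \<Rightarrow> bit" where "gcd_bit = Euclidean_Algorithm.gcd"
definition lcm_bit :: "bit \<Rightarrow> bit \<Rightarrow> bit" where "lcm_bit = Euclidean_Algorithm.lcm"
definition Gcd_bit :: "bit set \<Rightarrow> bit" where "Gcd_bit = Euclidean_Algorithm.Gcd"
definition Lcm_bit :: "bit set \<Rightarrow> bit" where "Lcm_bit = Euclidean_Algorithm.Lcm"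
instance by standard (simp_all add: gcd_bit_def lcm_bit_def Gcd_bit_def Lcm_bit_def)
end

instance bit :: field_gcd ..

lemma map_poly_of_int_add:
  "map_poly (of_int :: int \<Rightarrow> 'a::comm_ring_1) (p + q) = map_poly of_int p + map_poly of_int q"
  by (rule poly_eqI) (simp add: coeff_map_poly)

lemma map_poly_of_int_diff:
  "map_poly (of_int :: int \<Rightarrow> 'a::comm_ring_1) (p - q) = map_poly of_int p - map_poly of_int q"
  by (rule poly_eqI) (simp add: coeff_map_poly)

lemma map_poly_of_int_mult:
  "map_poly (of_int :: int \<Rightarrow> 'a::comm_ring_1) (p * q) = map_poly of_int p * map_poly of_int q"
proof (induction p)
  case (pCons a p)
  have "map_poly (of_int :: int \<Rightarrow> 'a) (smult a q) = smult (of_int a) (map_poly of_int q)"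
    by (rule poly_eqI) (simp add: coeff_map_poly)
  with pCons show ?case by (simp add: map_poly_pCons map_poly_of_int_add)
qed simp

lemmas map_poly_of_int_hom = map_poly_of_int_add map_poly_of_int_diff map_poly_of_int_mult

abbreviation red2 :: "int poly \<Rightarrow> bit poly" where
  "red2 \<equiv> map_poly of_int"

lemma of_int_bit_eq_0_iff: "(of_int z :: bit) = 0 \<longleftrightarrow> even z"
proof -
  have "(of_int z :: bit) = of_int (2 * (z div 2)) + of_int (z mod 2)"
    by (metis div_mult_mod_eq mult.commute of_int_add)
  then have "(of_int z :: bit) = of_int (z mod 2)"
    by simp
  then show ?thesis
    by (cases "even z") (simp_all add: odd_iff_mod_2_eq_one)
qed

lemma red2_eq_0_iff: "red2 p = 0 \<longleftrightarrow> (\<forall>i. even (coeff p i))"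
  by (simp add: poly_eq_iff coeff_map_poly of_int_bit_eq_0_iff)

lemma red2_eq_0_iff_double: "red2 p = 0 \<longleftrightarrow> (\<exists>q. p = 2 * q)"
proof
  assume "red2 p = 0"
  then have "p = 2 * map_poly (\<lambda>z. z div 2) p"
    by (intro poly_eqI) (simp add: red2_eq_0_iff coeff_map_poly numeral_mult_conv_smult)
  then show "\<exists>q. p = 2 * q" ..
next
  assume "\<exists>q. p = 2 * q"
  then show "red2 p = 0"
    by (auto simp: red2_eq_0_iff numeral_mult_conv_smult)
qed

lemma red2_double [simp]: "red2 (2 * q) = 0"
  using red2_eq_0_iff_double by blast

lemma degree_red2_monic: "lead_coeff h = 1 \<Longrightarrow> degree (red2 h) = degree h"
  by (simp add: map_poly_degree_eq)

lemma dvd_low_degree_eq_0: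
  fixes d p :: "'a::idom poly"
  assumes "d dvd p" and "degree p < degree d"
  shows "p = 0"
  using assms dvd_imp_degree_le by (metis leD)

text \<open>Over GF(2) an irreducible polynomial is not a unit, so the monic h has positive degree.\<close>

lemma degree_pos_if_irreducible_red2:
  assumes "lead_coeff h = 1" and "irreducible (red2 h)"
  shows "degree h > 0"
proof (rule ccontr)
  assume "\<not> degree h > 0"
  then have "h = 1"
    using assms(1) by (metis degree_0_id gr0I one_pCons)
  then show False
    using assms(2) by simp
qed

lemma monic_division:
  fixes f h :: "int poly"
  assumes "lead_coeff h = 1" and "degree h > 0"
  obtains q r where "f = h * q + r" and "degree r < degree h"
proof -
  obtain q r where qr: "pseudo_divmod f h = (q, r)"
    by (cases "pseudo_divmod f h") auto
  have "h \<noteq> 0"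
    using assms by auto
  from pseudo_divmod[OF this qr] assms have "f = h * q + r" and "degree r < degree h"
    by auto
  then show thesis ..
qed

lemma rho_eq_int_remainder:
  assumes "lead_coeff h = 1" and "x ^ 2 = h * q + r" and "degree r < degree h"
  shows "rho h x = map_poly of_int r"
proof -
  have "map_poly (of_int :: int \<Rightarrow> rat) (x ^ 2) = map_poly of_int r + map_poly of_int q * map_poly of_int h"
    using assms(2) by (simp add: map_poly_of_int_hom mult.commute)
  moreover have "degree (map_poly (of_int :: int \<Rightarrow> rat) r) < degree (map_poly (of_int :: int \<Rightarrow> rat) h)"
    using assms map_poly_degree_leq[of "of_int :: int \<Rightarrow> rat" r] by (simp add: map_poly_degree_eq)
  ultimately show ?thesis
    unfolding rho_def by (simp add: mod_poly_less)
qed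

lemma square_remainder:
  fixes h x :: "int poly"
  assumes "lead_coeff h = 1" and "degree h > 0"
  obtains q r where "x ^ 2 = h * q + r" and "degree r < degree h" and "rho h x = map_poly of_int r"
  using monic_division[OF assms] rho_eq_int_remainder[OF assms(1)] by metis


lemma mod2r_add_even: "mod2r (y + 2 * of_int m) = mod2r y"
proof -
  have "\<lfloor>(y + 2 * of_int m) / 2\<rfloor> = \<lfloor>y / 2\<rfloor> + m"
    by (simp add: add_divide_distrib)
  then show ?thesis
    unfolding mod2r_def by simp
qed

lemma mod2r_combination:
  "mod2r (mod2r x1 + mod2r x2 - mod2r x3 - mod2r x4) = mod2r (x1 + x2 - x3 - x4)"
proof -
  have "mod2r x1 + mod2r x2 - mod2r x3 - mod2r x4
      = (x1 + x2 - x3 - x4) + 2 * of_int (\<lfloor>x3 / 2\<rfloor> + \<lfloor>x4 / 2\<rfloor> - \<lfloor>x1 / 2\<rfloor> - \<lfloor>x2 / 2\<rfloor>)"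
    unfolding mod2r_def by simp
  then show ?thesis
    by (metis mod2r_add_even)
qed

lemma mod2r_of_int: "mod2r (of_int n) = of_int (n mod 2)"
proof -
  have "\<lfloor>(of_int n :: real) / 2\<rfloor> = n div 2"
    by (metis floor_divide_of_int_eq of_int_numeral)
  then show ?thesis
    unfolding mod2r_def by (simp add: minus_div_mult_eq_mod[symmetric])
qed

lemma fmap_combination:
  assumes "rho h g1 = map_poly of_int r1" "rho h g2 = map_poly of_int r2"
    "rho h g3 = map_poly of_int r3" "rho h g4 = map_poly of_int r4"
  shows "mod2r (fmap h g1 i + fmap h g2 i - fmap h g3 i - fmap h g4 i)
       = mod2r (of_int (coeff (r1 + r2 - r3 - r4) i) / 2)"
  unfolding fmap_def assms
  by (simp add: coeff_map_poly mod2r_combination diff_divide_distrib add_divide_distrib)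

lemma inG_eq_if_red2_eq:
  assumes "inG k a" and "inG k c" and "red2 a = red2 c"
  shows "a = c"
proof (rule poly_eqI)
  fix i
  have "even (coeff a i - coeff c i)"
    using assms(3) red2_eq_0_iff[of "a - c"] by (simp add: map_poly_of_int_diff)
  moreover have "coeff a i \<in> {0, 1}" and "coeff c i \<in> {0, 1}"
    using assms(1,2) unfolding inG_def by auto
  ultimately show "coeff a i = coeff c i"
    by auto
qed

text \<open>Distinct elements of G are distinct modulo 2 and h, since their difference has
  degree below k.\<close>

lemma inG_eq_if_dvd:
  assumes "lead_coeff h = 1" and "degree h = k" and "inG k a" and "inG k c"
    and "red2 h dvd red2 (a - c)"
  shows "a = c"
proof -
  have "degree (a - c) < k"
    using assms(3,4) degree_diff_le[of a "k - 1" c] unfolding inG_def by linarith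
  then have "degree (red2 (a - c)) < degree (red2 h)"
    using assms(1,2) map_poly_degree_leq[of "of_int :: int \<Rightarrow> bit" "a - c"] by (simp add: degree_red2_monic)
  then have "red2 (a - c) = 0"
    using assms(5) dvd_low_degree_eq_0 by blast
  then show ?thesis
    using inG_eq_if_red2_eq[OF assms(3,4)] by (simp add: map_poly_of_int_diff)
qed

lemma addG_eq_iff_red2:
  "(\<forall>i. addG g1 g2 i = addG g3 g4 i) \<longleftrightarrow> red2 g1 + red2 g2 = red2 g3 + red2 g4"
proof -
  have "(\<forall>i. addG g1 g2 i = addG g3 g4 i) \<longleftrightarrow> (\<forall>i. even (coeff (g1 + g2 - g3 - g4) i))"
    unfolding addG_def by (auto simp: mod_eq_dvd_iff algebra_simps)
  also have "\<dots> \<longleftrightarrow> red2 (g1 + g2 - g3 - g4) = 0"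
    by (simp add: red2_eq_0_iff)
  also have "\<dots> \<longleftrightarrow> red2 g1 + red2 g2 = red2 g3 + red2 g4"
    by (simp add: map_poly_of_int_hom algebra_simps eq_neg_iff_add_eq_0)
  finally show ?thesis .
qed

lemma squares_combination:
  fixes a b c d e :: "'a::comm_ring_1"
  assumes "a + b - c - d = 2 * e"
  shows "a^2 + b^2 - c^2 - d^2 = 2 * ((a - c) * (c - b) + 2 * (e * (a + b - c) - e * e))"
proof -
  have d: "d = a + b - c - 2 * e"
    using assms by (simp add: algebra_simps)
  show ?thesis
    unfolding d by (simp add: algebra_simps power2_eq_square)
qed

lemma half_of_low_degree_remainder:
  fixes h R Q S :: "int poly"
  assumes "lead_coeff h = 1" and "degree R < degree h" and "R + h * Q = 2 * S"
  shows "\<exists>T. R = 2 * T \<and> red2 h dvd red2 (S - T)"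
proof -
  have "red2 (R + h * Q) = 0"
    unfolding assms(3) red2_eq_0_iff_double by blast
  then have "red2 R = - (red2 h * red2 Q)"
    by (simp add: map_poly_of_int_hom eq_neg_iff_add_eq_0)
  then have "red2 h * red2 Q = 0"
    using dvd_low_degree_eq_0[of "red2 h" "red2 R"] assms(1,2)
      map_poly_degree_leq[of "of_int :: int \<Rightarrow> bit" R] by (simp add: degree_red2_monic)
  moreover have "red2 h \<noteq> 0"
    using assms(1) by (metis coeff_0 coeff_map_poly of_int_1 of_int_0 zero_neq_one)
  ultimately obtain Q' where Q': "Q = 2 * Q'"
    using red2_eq_0_iff_double by auto
  define T where "T = S - h * Q'"
  have "R = 2 * T"
    using assms(3) unfolding Q' T_def by (simp add: algebra_simps)
  moreover have "red2 h dvd red2 (S - T)"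
    unfolding T_def by (simp add: map_poly_of_int_mult)
  ultimately show ?thesis
    by blast
qed

lemma G_sum_nondegenerate:
  assumes G: "inG k g1" "inG k g2" "inG k g3" "inG k g4"
    and sum: "red2 g1 + red2 g2 = red2 g3 + red2 g4"
    and distinct: "{g1, g2} \<noteq> {g3, g4}"
  shows "g1 \<noteq> g3" and "g2 \<noteq> g3"
proof -
  show "g1 \<noteq> g3"
  proof
    assume "g1 = g3"
    with sum have "g2 = g4"
      using inG_eq_if_red2_eq[OF G(2,4)] by simp
    with \<open>g1 = g3\<close> distinct show False
      by simp
  qed
  show "g2 \<noteq> g3"
  proof
    assume "g2 = g3"
    with sum have "g1 = g4"
      using inG_eq_if_red2_eq[OF G(1,4)] by (simp add: add.commute)
    with \<open>g2 = g3\<close> distinct show False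
      by (simp add: insert_commute)
  qed
qed

lemma remainder_combination:
  fixes h g1 g2 g3 g4 q1 q2 q3 q4 r1 r2 r3 r4 :: "int poly"
  assumes monic: "lead_coeff h = 1" and deg: "degree h = k" and irred: "irreducible (red2 h)"
    and G: "inG k g1" "inG k g2" "inG k g3" "inG k g4"
    and sum: "red2 g1 + red2 g2 = red2 g3 + red2 g4"
    and ne: "g1 \<noteq> g3" "g2 \<noteq> g3"
    and div: "g1 ^ 2 = h * q1 + r1" "g2 ^ 2 = h * q2 + r2" "g3 ^ 2 = h * q3 + r3" "g4 ^ 2 = h * q4 + r4"
    and low: "degree r1 < k" "degree r2 < k" "degree r3 < k" "degree r4 < k"
  shows "\<exists>T. r1 + r2 - r3 - r4 = 2 * T \<and> (\<exists>i<k. odd (coeff T i))"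
proof -
  have low_sum: "degree (r1 + r2 - r3 - r4) < k"
    using low degree_add_le[of r1 "k - 1" r2] degree_diff_le[of "r1 + r2" "k - 1" r3]
      degree_diff_le[of "r1 + r2 - r3" "k - 1" r4] by linarith
  have "red2 (g1 + g2 - g3 - g4) = 0"
    using sum by (simp add: map_poly_of_int_hom algebra_simps)
  then obtain e where e: "g1 + g2 - g3 - g4 = 2 * e"
    using red2_eq_0_iff_double by blast
  define S where "S = (g1 - g3) * (g3 - g2) + 2 * (e * (g1 + g2 - g3) - e * e)"
  have "(r1 + r2 - r3 - r4) + h * (q1 + q2 - q3 - q4) = 2 * S"
    using squares_combination[OF e] div unfolding S_def by (simp add: algebra_simps)
  then obtain T where T: "r1 + r2 - r3 - r4 = 2 * T" and dvd: "red2 h dvd red2 (S - T)"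
    using half_of_low_degree_remainder[OF monic] low_sum deg by blast
  have "red2 T \<noteq> 0"
  proof
    assume "red2 T = 0"
    then have "red2 (S - T) = red2 ((g1 - g3) * (g3 - g2))"
      unfolding S_def by (simp add: map_poly_of_int_add map_poly_of_int_diff)
    with dvd have "red2 h dvd red2 (g1 - g3) * red2 (g3 - g2)"
      by (simp add: map_poly_of_int_mult)
    moreover have "prime_elem (red2 h)"
      using irred by (simp add: prime_elem_iff_irreducible)
    ultimately have "red2 h dvd red2 (g1 - g3) \<or> red2 h dvd red2 (g3 - g2)"
      by (simp add: prime_elem_dvd_mult_iff)
    then show False
      using inG_eq_if_dvd[OF monic deg] G ne by metis
  qed
  then obtain i where i: "odd (coeff T i)"
    using red2_eq_0_iff by blast
  then have "i \<le> degree T"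
    by (intro le_degree) auto
  also have "degree T < k"
    using low_sum unfolding T by (simp add: numeral_mult_conv_smult)
  finally show ?thesis
    using T i by blast
qed

theorem lemma13:
  fixes h g1 g2 g3 g4 :: "int poly" and k :: nat
  assumes monic: "lead_coeff h = 1"
    and deg: "degree h = k"
    and coeffs01: "\<forall>i. coeff h i \<in> {0, 1}"
    and irred: "irreducible (map_poly (of_int :: int \<Rightarrow> bit) h)"
    and G: "inG k g1" "inG k g2" "inG k g3" "inG k g4"
    and sum_eq: "\<forall>i. addG g1 g2 i = addG g3 g4 i"
    and distinct: "{g1, g2} \<noteq> {g3, g4}"
  shows "(\<forall>i<k. mod2r (fmap h g1 i + fmap h g2 i - fmap h g3 i - fmap h g4 i) \<in> \<int>)
       \<and> (\<exists>i<k. mod2r (fmap h g1 i + fmap h g2 i - fmap h g3 i - fmap h g4 i) \<noteq> 0)"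
proof -
  have kpos: "degree h > 0"
    using degree_pos_if_irreducible_red2[OF monic irred] .
  obtain q1 r1 where r1: "g1 ^ 2 = h * q1 + r1" "degree r1 < k" "rho h g1 = map_poly of_int r1"
    using square_remainder[OF monic kpos] deg by metis
  obtain q2 r2 where r2: "g2 ^ 2 = h * q2 + r2" "degree r2 < k" "rho h g2 = map_poly of_int r2"
    using square_remainder[OF monic kpos] deg by metis
  obtain q3 r3 where r3: "g3 ^ 2 = h * q3 + r3" "degree r3 < k" "rho h g3 = map_poly of_int r3"
    using square_remainder[OF monic kpos] deg by metis
  obtain q4 r4 where r4: "g4 ^ 2 = h * q4 + r4" "degree r4 < k" "rho h g4 = map_poly of_int r4"
    using square_remainder[OF monic kpos] deg by metis
  have sum: "red2 g1 + red2 g2 = red2 g3 + red2 g4"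
    using sum_eq addG_eq_iff_red2 by blast
  obtain T where T: "r1 + r2 - r3 - r4 = 2 * T" and odd: "\<exists>i<k. odd (coeff T i)"
    using remainder_combination[OF monic deg irred G sum G_sum_nondegenerate[OF G sum distinct]
        r1(1) r2(1) r3(1) r4(1) r1(2) r2(2) r3(2) r4(2)] by blast
  have "mod2r (fmap h g1 i + fmap h g2 i - fmap h g3 i - fmap h g4 i) = of_int (coeff T i mod 2)" for i
    unfolding fmap_combination[OF r1(3) r2(3) r3(3) r4(3)] T
    by (simp add: numeral_mult_conv_smult mod2r_of_int)
  then show ?thesis
    using odd by (auto simp: odd_iff_mod_2_eq_one)
qed

end
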